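(* Let $L$ be a finite graded lattice of rank $n$. Then $L$ is supersolvable if and only if $L$ admits an $S_n$ EL-labeling.
   Context: For a finite graded poset $P$ of rank $n$ with least element $\hat0$ and greatest element $\hat1$, let $\mathcal{E}(P)=\{(s,t): t \text{ covers } s\}$ be the set of edges of its Hasse diagram. An edge-labeling is a map $\lambda:\mathcal{E}(P)\to\mathbb{Z}$. For a maximal chain $s=s_0<s_1<\cdots<s_k=t$ of an interval $[s,t]$, its label sequence is $(\lambda(s_0,s_1),\dots,\lambda(s_{k-1},s_k))$; the chain is increasing if this sequence is weakly increasing. An EL-labeling is an edge-labeling such that every interval $[s,t]$ has exactly one increasing maximal chain, and the label sequence of that chain is strictly lexicographically smaller than that of every other maximal chain of $[s,t]$. An $S_n$ EL-labeling is an EL-labeling such that for every maximal chain $\hat0=x_0<x_1<\cdots<x_n=\hat1$ of $P$, the sequence $(\lambda(x_0,x_1),\dots,\lambda(x_{n-1},x_n))$ is a permutation of $[n]=\{1,\dots,n\}$. A finite lattice $L$ is supersolvable if it contains a maximal chain (an M-chain) which, together with any other chain of $L$, generates a distributive sublattice of $L$. *)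

theory Defs
  imports Main
begin

text \<open>Finite lattices are modelled by a type of class finite and bounded_lattice
  (every finite lattice is bounded, so this is no restriction).\<close>

definition covers :: "'a::order \<Rightarrow> 'a \<Rightarrow> bool" where
  "covers s t \<longleftrightarrow> s < t \<and> \<not> (\<exists>z. s < z \<and> z < t)"

definition max_chain_of :: "'a::order list \<Rightarrow> 'a \<Rightarrow> 'a \<Rightarrow> bool" where
  "max_chain_of xs s t \<longleftrightarrow> xs \<noteq> [] \<and> hd xs = s \<and> last xs = t \<and>
     (\<forall>i. Suc i < length xs \<longrightarrow> covers (xs ! i) (xs ! Suc i))"

definition graded_of_rank :: "nat \<Rightarrow> 'a::bounded_lattice itself \<Rightarrow> bool" where
  "graded_of_rank n _ \<longleftrightarrow>
     (\<forall>xs::'a list. max_chain_of xs bot top \<longrightarrow> length xs = Suc n)"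

definition label_seq :: "('a \<Rightarrow> 'a \<Rightarrow> int) \<Rightarrow> 'a list \<Rightarrow> int list" where
  "label_seq lam xs = map (\<lambda>(a, b). lam a b) (zip xs (tl xs))"

definition increasing_chain :: "('a \<Rightarrow> 'a \<Rightarrow> int) \<Rightarrow> 'a list \<Rightarrow> bool" where
  "increasing_chain lam xs \<longleftrightarrow> sorted (label_seq lam xs)"

text \<open>EL-labeling (the labeling only matters on covering pairs).\<close>
definition EL_labeling :: "('a::order \<Rightarrow> 'a \<Rightarrow> int) \<Rightarrow> bool" where
  "EL_labeling lam \<longleftrightarrow>
     (\<forall>s t. s \<le> t \<longrightarrow>
        (\<exists>!xs. max_chain_of xs s t \<and> increasing_chain lam xs) \<and>
        (\<forall>xs ys. max_chain_of xs s t \<and> increasing_chain lam xs \<and>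
                 max_chain_of ys s t \<and> ys \<noteq> xs \<longrightarrow>
                 (label_seq lam xs, label_seq lam ys) \<in> lexord {(a, b). a < b}))"

definition Sn_EL_labeling :: "nat \<Rightarrow> ('a::bounded_lattice \<Rightarrow> 'a \<Rightarrow> int) \<Rightarrow> bool" where
  "Sn_EL_labeling n lam \<longleftrightarrow> EL_labeling lam \<and>
     (\<forall>xs. max_chain_of xs bot top \<longrightarrow>
        distinct (label_seq lam xs) \<and> set (label_seq lam xs) = {1..int n})"

definition is_chain :: "'a::order set \<Rightarrow> bool" where
  "is_chain C \<longleftrightarrow> (\<forall>x\<in>C. \<forall>y\<in>C. x \<le> y \<or> y \<le> x)"

definition is_maximal_chain :: "'a::order set \<Rightarrow> bool" where
  "is_maximal_chain M \<longleftrightarrow> is_chain M \<and> (\<forall>C. is_chain C \<and> M \<subseteq> C \<longrightarrow> C = M)"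

inductive_set gen_sublattice :: "'a::lattice set \<Rightarrow> 'a set" for S where
  base: "x \<in> S \<Longrightarrow> x \<in> gen_sublattice S"
| meet: "x \<in> gen_sublattice S \<Longrightarrow> y \<in> gen_sublattice S \<Longrightarrow> inf x y \<in> gen_sublattice S"
| join: "x \<in> gen_sublattice S \<Longrightarrow> y \<in> gen_sublattice S \<Longrightarrow> sup x y \<in> gen_sublattice S"

definition distributive_on :: "'a::lattice set \<Rightarrow> bool" where
  "distributive_on D \<longleftrightarrow>
     (\<forall>x\<in>D. \<forall>y\<in>D. \<forall>z\<in>D. inf x (sup y z) = sup (inf x y) (inf x z))"

definition M_chain :: "'a::lattice set \<Rightarrow> bool" where
  "M_chain M \<longleftrightarrow> is_maximal_chain M \<and>
     (\<forall>C. is_chain C \<longrightarrow> distributive_on (gen_sublattice (M \<union> C)))"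

definition supersolvable :: "'a::lattice itself \<Rightarrow> bool" where
  "supersolvable _ \<longleftrightarrow> (\<exists>M::'a set. M_chain M)"

end

theory Submission
  imports Defs
begin

text \<open>
  Given an M-chain bot = m 0 < m 1 < ... < m n = top, label a cover x < y by the least i with
  y \<le> x \<squnion> m i (Bjorner's labelling). Distributivity of the sublattice generated by the M-chain
  and {x, y} shows that along a cover the set of jumps {i. x \<sqinter> m (i - 1) \<noteq> x \<sqinter> m i} grows
  by exactly the label. Hence the labels of a maximal chain of [s, t] are the jumps of t that are not
  jumps of s, each once, and the unique increasing chain is built greedily, always adding the
  smallest missing label.

  Conversely, for an S_n EL-labelling the set S x of labels of a maximal chain from bot to x does not
  depend on the chain. The increasing maximal chain m 0 < ... < m n of the whole lattice has
  S (m i) = {1..i}, and S (x \<squnion> m i) = S x \<union> {1..i}, S (x \<sqinter> m i) = S x \<inter> {1..i}. Every element of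
  the sublattice generated by this chain and a chain C is a join of elements m i \<sqinter> c with c in
  C \<union> {top}; on such joins S is an injective lattice homomorphism into sets with \<union> and \<inter>, which
  forces distributivity.
\<close>

lemma covers_less: "covers s t \<Longrightarrow> s < t"
  by (simp add: covers_def)

lemma covers_between: "covers x y \<Longrightarrow> x \<le> w \<Longrightarrow> w \<le> y \<Longrightarrow> w = x \<or> w = y"
  unfolding covers_def by (metis order.strict_iff_order)

lemma ex_covers_below:
  fixes x y :: "'a::{finite,order}"
  assumes "x < y"
  shows "\<exists>z. covers x z \<and> z \<le> y"
proof -
  obtain z where z: "x < z" "z \<le> y" and min: "\<And>w. x < w \<Longrightarrow> w \<le> y \<Longrightarrow> w \<le> z \<Longrightarrow> w = z"
    using finite_has_minimal[of "{z. x < z \<and> z \<le> y}"] assms by auto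
  have "covers x z"
    unfolding covers_def
  proof (intro conjI z(1) notI)
    assume "\<exists>w. x < w \<and> w < z"
    then obtain w where "x < w" "w < z" by blast
    then show False using min[of w] z(2) by (metis order.strict_implies_order order.trans less_irrefl)
  qed
  then show ?thesis using z by blast
qed

lemma max_chain_of_iff_successively:
  "max_chain_of xs s t \<longleftrightarrow> xs \<noteq> [] \<and> hd xs = s \<and> last xs = t \<and> successively covers xs"
  by (simp add: max_chain_of_def successively_conv_nth)

lemma max_chain_of_Nil [simp]: "\<not> max_chain_of [] s t"
  by (simp add: max_chain_of_def)

lemma max_chain_of_singleton [simp]: "max_chain_of [x] s t \<longleftrightarrow> x = s \<and> x = t"
  by (auto simp add: max_chain_of_def)

lemma max_chain_of_Cons_Cons [simp]:
  "max_chain_of (x # y # ys) s t \<longleftrightarrow> x = s \<and> covers x y \<and> max_chain_of (y # ys) y t"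
  by (auto simp add: max_chain_of_iff_successively)

lemma label_seq_Nil [simp]: "label_seq lam [] = []"
  and label_seq_singleton [simp]: "label_seq lam [x] = []"
  and label_seq_Cons_Cons [simp]: "label_seq lam (x # y # ys) = lam x y # label_seq lam (y # ys)"
  by (simp_all add: label_seq_def)

lemma increasing_chain_Cons_Cons:
  "increasing_chain lam (x # y # ys) \<longleftrightarrow>
     (\<forall>v \<in> set (label_seq lam (y # ys)). lam x y \<le> v) \<and> increasing_chain lam (y # ys)"
  by (simp add: increasing_chain_def)

lemma max_chain_of_ConsE:
  assumes "max_chain_of xs s t" "s \<noteq> t"
  obtains y ys where "xs = s # y # ys" "covers s y" "max_chain_of (y # ys) y t"
  using assms by (cases xs rule: remdups_adj.cases) auto

lemma sorted_wrt_less_if_max_chain_of: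
  "max_chain_of xs s t \<Longrightarrow> sorted_wrt (<) xs"
proof -
  assume "max_chain_of xs s t"
  then have "successively (<) xs"
    unfolding max_chain_of_iff_successively using successively_mono covers_less by blast
  then show ?thesis
    by (simp add: successively_conv_sorted_wrt transp_on_less)
qed

lemma max_chain_of_le: "max_chain_of xs s t \<Longrightarrow> s \<le> t"
proof (induction xs arbitrary: s rule: induct_list012)
  case (3 x y zs)
  then have "x = s" "covers x y" "y \<le> t" by auto
  then show ?case by (meson covers_less order.strict_implies_order order.trans)
qed auto

lemma max_chain_of_same: "max_chain_of xs s s \<Longrightarrow> xs = [s]"
proof (rule ccontr)
  assume "max_chain_of xs s s" "xs \<noteq> [s]"
  then obtain y ys where "covers s y" "max_chain_of (y # ys) y s"
    by (cases xs rule: remdups_adj.cases) auto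
  then have "s < y" "y \<le> s" by (auto dest: covers_less max_chain_of_le)
  then show False by simp
qed

lemma max_chain_of_append:
  "max_chain_of xs s t \<Longrightarrow> max_chain_of ys t u \<Longrightarrow>
     max_chain_of (xs @ tl ys) s u \<and> label_seq lam (xs @ tl ys) = label_seq lam xs @ label_seq lam ys"
proof (induction xs arbitrary: s rule: induct_list012)
  case (2 x)
  then have "x = s" "s = t" by auto
  moreover have "[x] @ tl ys = ys"
    using 2 \<open>s = t\<close> \<open>x = s\<close> by (metis append_Cons append_Nil list.collapse max_chain_of_def)
  ultimately show ?case using 2 by simp
next
  case (3 x y zs)
  then have "x = s" "covers x y" "max_chain_of (y # zs) y t" by auto
  with 3(2)[OF this(3) 3(4)] show ?case by simp
qed simp

lemma mem_max_chain_of_if_comparable: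
  assumes "max_chain_of xs s t" "s \<le> x" "x \<le> t" "\<forall>y\<in>set xs. y \<le> x \<or> x \<le> y"
  shows "x \<in> set xs"
  using assms
proof (induction xs arbitrary: s rule: induct_list012)
  case (3 z y zs)
  then have "z = s" "covers s y" "max_chain_of (y # zs) y t" by auto
  show ?case
  proof (cases "x \<le> y")
    case True
    then show ?thesis using covers_between[OF \<open>covers s y\<close> \<open>s \<le> x\<close>] \<open>z = s\<close> by auto
  next
    case False
    then have "y \<le> x" using "3.prems"(4) by simp
    then show ?thesis using "3.IH"(2)[OF \<open>max_chain_of (y # zs) y t\<close>] "3.prems"(3,4) by simp
  qed
qed (auto intro: order.antisym)

lemma sorted_wrt_less_nth_le:
  fixes xs :: "'a::order list"
  assumes "sorted_wrt (<) xs" "i \<le> j" "j < length xs"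
  shows "xs ! i \<le> xs ! j"
proof (cases "i = j")
  case False
  then show ?thesis using sorted_wrt_nth_less[OF assms(1), of i j] assms(2,3) by simp
qed simp

lemma is_chain_subset: "is_chain C \<Longrightarrow> A \<subseteq> C \<Longrightarrow> is_chain A"
  unfolding is_chain_def by blast

lemma distributive_on_subset: "distributive_on D \<Longrightarrow> E \<subseteq> D \<Longrightarrow> distributive_on E"
  unfolding distributive_on_def by blast

lemma is_chain_set_if_sorted_wrt_less:
  fixes xs :: "'a::order list"
  assumes "sorted_wrt (<) xs"
  shows "is_chain (set xs)"
  unfolding is_chain_def
proof (intro ballI)
  fix x y assume "x \<in> set xs" "y \<in> set xs"
  then obtain i j where "i < length xs" "x = xs ! i" "j < length xs" "y = xs ! j"
    by (metis in_set_conv_nth)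
  then show "x \<le> y \<or> y \<le> x"
    using sorted_wrt_less_nth_le[OF assms, of i j] sorted_wrt_less_nth_le[OF assms, of j i]
    by (cases "i \<le> j") auto
qed

lemma maximal_chain_set_if_max_chain_of:
  fixes xs :: "'a::{order_bot,order_top} list"
  assumes "max_chain_of xs bot top"
  shows "is_maximal_chain (set xs)"
proof -
  have "C = set xs" if "is_chain C" "set xs \<subseteq> C" for C
  proof
    show "C \<subseteq> set xs"
    proof
      fix x assume "x \<in> C"
      then have "\<forall>y\<in>set xs. y \<le> x \<or> x \<le> y" using that unfolding is_chain_def by blast
      then show "x \<in> set xs" using mem_max_chain_of_if_comparable[OF assms bot_least top_greatest] by blast
    qed
  qed (use that in blast)
  then show ?thesis
    using is_chain_set_if_sorted_wrt_less[OF sorted_wrt_less_if_max_chain_of[OF assms]]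
    unfolding is_maximal_chain_def by blast
qed

lemma mem_maximal_chain_if_comparable:
  assumes "is_maximal_chain M" "\<And>y. y \<in> M \<Longrightarrow> y \<le> z \<or> z \<le> y"
  shows "z \<in> M"
proof -
  have "is_chain (insert z M)"
    using assms unfolding is_maximal_chain_def is_chain_def by auto
  then have "insert z M = M"
    using assms(1) unfolding is_maximal_chain_def by blast
  then show ?thesis by blast
qed

lemma chain_has_greatest:
  assumes "is_chain C" "finite A" "A \<noteq> {}" "A \<subseteq> C"
  obtains g where "g \<in> A" "\<And>a. a \<in> A \<Longrightarrow> a \<le> g"
proof -
  obtain g where "g \<in> A" "\<forall>a\<in>A. g \<le> a \<longrightarrow> g = a"
    using finite_has_maximal[OF assms(2,3)] by blast
  moreover have "a \<le> g" if "a \<in> A" for a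
    using assms(1,4) \<open>g \<in> A\<close> \<open>\<forall>a\<in>A. g \<le> a \<longrightarrow> g = a\<close> that
    unfolding is_chain_def by blast
  ultimately show thesis using that by blast
qed

lemma finite_chain_ranking_induct [consumes 2, case_names empty insert]:
  fixes f :: "'b \<Rightarrow> 'a::order"
  assumes "finite A" "is_chain (f ` A)"
    and "P {}"
    and "\<And>x B. finite B \<Longrightarrow> B \<subseteq> A \<Longrightarrow> x \<in> A \<Longrightarrow> x \<notin> B \<Longrightarrow> (\<And>y. y \<in> B \<Longrightarrow> f y \<le> f x) \<Longrightarrow>
           P B \<Longrightarrow> P (insert x B)"
  shows "P A"
  using assms(1)
proof (induction rule: finite_remove_induct)
  case (remove B)
  obtain g where "g \<in> f ` B" and greatest: "\<And>a. a \<in> f ` B \<Longrightarrow> a \<le> g"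
    using chain_has_greatest[OF assms(2), of "f ` B"] remove.hyps by blast
  then obtain x where "x \<in> B" "f x = g" by blast
  then have "P (insert x (B - {x}))"
    using assms(4)[of "B - {x}" x] remove greatest by blast
  then show ?case using \<open>x \<in> B\<close> by (simp add: insert_absorb)
qed (rule assms(3))

lemma ex_sorted_list_of_chain:
  fixes A :: "'a::order set"
  assumes "finite A" "is_chain A"
  shows "\<exists>xs. sorted_wrt (<) xs \<and> set xs = A"
proof -
  have "is_chain (id ` A)" using assms(2) by simp
  with assms(1) show ?thesis
  proof (induction rule: finite_chain_ranking_induct)
    case (insert x B)
    then obtain xs where "sorted_wrt (<) xs" "set xs = B" by blast
    moreover have "\<forall>y\<in>B. y < x" using insert.hyps(4,5) by (auto simp: order.strict_iff_order)
    ultimately show ?case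
      by (intro exI[of _ "xs @ [x]"]) (simp add: sorted_wrt_append)
  qed simp
qed

lemma sorted_wrt_less_nth_split:
  fixes xs :: "'a::order list"
  assumes "sorted_wrt (<) xs" "Suc i < length xs" "y \<in> set xs"
  shows "y \<le> xs ! i \<or> xs ! Suc i \<le> y"
proof -
  obtain j where "j < length xs" "y = xs ! j" using assms(3) by (metis in_set_conv_nth)
  then show ?thesis
    using sorted_wrt_less_nth_le[OF assms(1), of j i] sorted_wrt_less_nth_le[OF assms(1), of "Suc i" j] assms(2)
    by (cases "j \<le> i") auto
qed

lemma max_chain_of_if_maximal_chain:
  fixes M :: "'a::{order_bot,order_top} set"
  assumes "is_maximal_chain M" "finite M"
  obtains xs where "max_chain_of xs bot top" "set xs = M"
proof -
  have mem: "z \<in> M" if "\<And>y. y \<in> M \<Longrightarrow> y \<le> z \<or> z \<le> y" for z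
    using mem_maximal_chain_if_comparable[OF assms(1)] that by blast
  obtain xs where sorted: "sorted_wrt (<) xs" and xs: "set xs = M"
    using ex_sorted_list_of_chain assms unfolding is_maximal_chain_def by blast
  obtain i j where "i < length xs" "xs ! i = bot" "j < length xs" "xs ! j = top"
    using mem[of bot] mem[of top] xs by (metis bot_least top_greatest in_set_conv_nth)
  moreover from this have "xs \<noteq> []" by auto
  ultimately have "xs \<noteq> []" "hd xs = bot" "last xs = top"
    using sorted_wrt_less_nth_le[OF sorted, of 0 i] sorted_wrt_less_nth_le[OF sorted, of j "length xs - 1"]
    by (auto simp: hd_conv_nth last_conv_nth bot_unique top_unique)
  moreover have "covers (xs ! i) (xs ! Suc i)" if i: "Suc i < length xs" for i
    unfolding covers_def
  proof (intro conjI notI)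
    show "xs ! i < xs ! Suc i" using sorted i unfolding sorted_wrt_iff_nth_less by simp
    assume "\<exists>z. xs ! i < z \<and> z < xs ! Suc i"
    then obtain z where z: "xs ! i < z" "z < xs ! Suc i" by blast
    have "y \<le> z \<or> z \<le> y" if "y \<in> M" for y
      using sorted_wrt_less_nth_split[OF sorted i, of y] that xs less_imp_le[OF z(1)] less_imp_le[OF z(2)]
      by (metis order.trans)
    then have "z \<in> set xs" using mem xs by blast
    then show False
      using sorted_wrt_less_nth_split[OF sorted i, of z] z by (auto dest: leD)
  qed
  ultimately have "max_chain_of xs bot top" unfolding max_chain_of_def by blast
  with xs that show thesis by blast
qed

lemma lexord_less_if_sorted_distinct_perm:
  fixes xs ys :: "'a::linorder list"
  shows "sorted xs \<Longrightarrow> distinct xs \<Longrightarrow> distinct ys \<Longrightarrow> set ys = set xs \<Longrightarrow> ys \<noteq> xs \<Longrightarrow>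
    (xs, ys) \<in> lexord {(a, b). a < b}"
proof (induction xs arbitrary: ys)
  case (Cons x xs)
  then obtain y ys' where ys: "ys = y # ys'" by (cases ys) auto
  show ?case
  proof (cases "y = x")
    case True
    have "set ys' = set xs" "distinct ys'" "ys' \<noteq> xs"
      using Cons.prems ys True by auto
    then show ?thesis using Cons ys True by auto
  next
    case False
    then have "x < y" using Cons.prems ys by (metis list.set_intros sorted_simps(2) set_ConsD order_neq_le_trans)
    then show ?thesis using ys by simp
  qed
qed simp

subsection \<open>The labelling induced by an M-chain\<close>

locale indexed_M_chain =
  fixes m :: "nat \<Rightarrow> 'a::{finite,bounded_lattice}" and n :: nat
  assumes m_0: "m 0 = bot"
    and m_top: "\<And>i. n \<le> i \<Longrightarrow> m i = top"
    and covers_m: "\<And>i. i < n \<Longrightarrow> covers (m i) (m (Suc i))"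
    and distributive_m: "\<And>C. is_chain C \<Longrightarrow> distributive_on (gen_sublattice (range m \<union> C))"
begin

lemma m_mono: "i \<le> j \<Longrightarrow> m i \<le> m j"
proof (rule lift_Suc_mono_le[of m])
  show "m k \<le> m (Suc k)" for k
    using covers_m[of k] m_top[of k] m_top[of "Suc k"] by (cases "k < n") (auto dest: covers_less)
qed

lemma distrib_pair:
  assumes "x \<le> y"
    and "a \<in> gen_sublattice (range m \<union> {x, y})" "b \<in> gen_sublattice (range m \<union> {x, y})"
      "c \<in> gen_sublattice (range m \<union> {x, y})"
  shows "inf a (sup b c) = sup (inf a b) (inf a c)"
proof -
  have "is_chain {x, y}" using assms(1) unfolding is_chain_def by auto
  then show ?thesis using distributive_m assms(2-4) unfolding distributive_on_def by blast
qed

text \<open>The base rule comes last, so that intro first decomposes meets and joins.\<close>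

lemmas gen_sublattice_intros = gen_sublattice.meet gen_sublattice.join gen_sublattice.base

lemma inf_sup_m: "x \<le> y \<Longrightarrow> inf y (sup x (m i)) = sup x (inf y (m i))"
  using distrib_pair[of x y y x "m i"] by (simp add: gen_sublattice.base inf_absorb2)

definition label :: "'a \<Rightarrow> 'a \<Rightarrow> nat" where
  "label x y = (LEAST i. y \<le> sup x (m i))"

lemma le_sup_m_label: "y \<le> sup x (m (label x y))"
  unfolding label_def by (rule LeastI[of _ n]) (simp add: m_top)

lemma not_le_sup_m_below_label: "i < label x y \<Longrightarrow> \<not> y \<le> sup x (m i)"
  unfolding label_def by (rule not_less_Least)

lemma label_le: "label x y \<le> n"
  unfolding label_def by (rule Least_le) (simp add: m_top)

lemma label_pos: "x < y \<Longrightarrow> 0 < label x y"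
  using le_sup_m_label[of y x] m_0 by (metis gr0I leD sup_bot.right_neutral)

definition jumps :: "'a \<Rightarrow> nat set" where
  "jumps x = {i \<in> {1..n}. inf x (m (i - 1)) \<noteq> inf x (m i)}"

lemma jumps_subset: "jumps x \<subseteq> {1..n}"
  unfolding jumps_def by auto

lemma jumps_bot: "jumps bot = {}"
  unfolding jumps_def by auto

lemma jumps_top: "jumps top = {1..n}"
proof -
  have "m (i - 1) < m i" if "i \<in> {1..n}" for i
  proof -
    have "i - 1 < n" "Suc (i - 1) = i" using that by auto
    then show ?thesis using covers_less[OF covers_m[of "i - 1"]] by simp
  qed
  then show ?thesis unfolding jumps_def by fastforce
qed

lemma jumps_mono:
  assumes "x \<le> y"
  shows "jumps x \<subseteq> jumps y"
proof
  fix i assume i: "i \<in> jumps x"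
  have mono: "inf z (m (i - 1)) \<le> inf z (m i)" for z
    using m_mono[of "i - 1" i] by (simp add: le_infI2)
  show "i \<in> jumps y"
  proof (rule ccontr)
    assume "i \<notin> jumps y"
    then have "inf y (m i) = inf y (m (i - 1))" using i unfolding jumps_def by auto
    have "inf x (m i) \<le> inf y (m i)" using assms by (simp add: le_infI1)
    also have "\<dots> \<le> m (i - 1)" using \<open>inf y (m i) = inf y (m (i - 1))\<close> by simp
    finally have "inf x (m i) \<le> inf x (m (i - 1))" by simp
    then have "inf x (m (i - 1)) = inf x (m i)" using mono[of x] by (rule order.antisym[rotated])
    then show False using i unfolding jumps_def by auto
  qed
qed

lemma jumps_sup_m: "jumps (sup s (m q)) \<subseteq> jumps s \<union> {1..q}"
proof
  fix i assume i: "i \<in> jumps (sup s (m q))"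
  show "i \<in> jumps s \<union> {1..q}"
  proof (rule ccontr)
    assume "i \<notin> jumps s \<union> {1..q}"
    then have "q \<le> i - 1" and eq: "inf s (m (i - 1)) = inf s (m i)"
      using i unfolding jumps_def by auto
    have "inf (sup s (m q)) (m j) = sup (inf s (m j)) (m q)" if "q \<le> j" for j
      using distrib_pair[of s s "m j" s "m q"] m_mono[OF that]
      by (simp add: gen_sublattice.base inf_commute inf.absorb1 inf.absorb2)
    then have "inf (sup s (m q)) (m (i - 1)) = inf (sup s (m q)) (m i)"
      using eq \<open>q \<le> i - 1\<close> by simp
    then show False using i unfolding jumps_def by auto
  qed
qed

context
  fixes x y :: 'a
  assumes xy: "covers x y"
begin

lemma le_covers: "x \<le> y"
  using covers_less[OF xy] by simp

lemma distrib_covers: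
  "a \<in> gen_sublattice (range m \<union> {x, y}) \<Longrightarrow> b \<in> gen_sublattice (range m \<union> {x, y}) \<Longrightarrow>
   c \<in> gen_sublattice (range m \<union> {x, y}) \<Longrightarrow> inf a (sup b c) = sup (inf a b) (inf a c)"
  by (rule distrib_pair[OF le_covers])

lemma inf_m_below_label: "i < label x y \<Longrightarrow> inf y (m i) = inf x (m i)"
proof -
  assume "i < label x y"
  then have "inf y (sup x (m i)) \<noteq> y"
    using not_le_sup_m_below_label by (metis inf.absorb_iff1)
  then have "inf y (sup x (m i)) = x"
    using covers_between[OF xy, of "inf y (sup x (m i))"] le_covers by simp
  then have "inf y (m i) \<le> x"
    using inf_sup_m[OF le_covers, of i] by (metis sup.cobounded2)
  then show ?thesis
    using le_covers by (intro order.antisym) (auto intro: le_infI1)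
qed

lemma sup_inf_m_from_label: "label x y \<le> i \<Longrightarrow> sup x (inf y (m i)) = y"
proof -
  assume "label x y \<le> i"
  then have "sup x (m (label x y)) \<le> sup x (m i)"
    using m_mono by (simp add: le_supI2)
  then have "y \<le> sup x (m i)"
    using le_sup_m_label[of y x] by (rule order.trans[rotated])
  then show ?thesis
    using inf_sup_m[OF le_covers, of i] by (simp add: inf_absorb1)
qed

lemma inf_m_ne_from_label: "label x y \<le> i \<Longrightarrow> inf y (m i) \<noteq> inf x (m i)"
proof
  assume "label x y \<le> i" "inf y (m i) = inf x (m i)"
  then have "y = x" using sup_inf_m_from_label[of i] by (metis sup_inf_absorb)
  then show False using covers_less[OF xy] by simp
qed

lemma label_mem_jumps: "label x y \<in> jumps y"
proof -
  define k where "k = label x y"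
  have k: "1 \<le> k" "k \<le> n"
    using label_pos[OF covers_less[OF xy]] label_le k_def by auto
  have "inf y (m (k - 1)) = inf x (m (k - 1))"
    using inf_m_below_label k k_def by simp
  also have "\<dots> \<le> inf x (m k)"
    using m_mono[of "k - 1" k] by (simp add: le_infI2)
  finally have "inf y (m (k - 1)) \<le> inf x (m k)" .
  moreover have "inf x (m k) \<le> inf y (m k)"
    using le_covers by (simp add: le_infI1)
  moreover have "inf y (m k) \<noteq> inf x (m k)"
    using inf_m_ne_from_label k_def by simp
  ultimately have "inf y (m (k - 1)) \<noteq> inf y (m k)"
    by (metis order.antisym)
  then show ?thesis using k unfolding jumps_def k_def by simp
qed

text \<open>Since m (k - 1) is covered by m k, a jump of x at k would force (x \<sqinter> m k) \<squnion> m (k - 1) = m k,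
  and distributivity would then collapse y \<sqinter> m k to x \<sqinter> m k.\<close>

lemma label_not_mem_jumps: "label x y \<notin> jumps x"
proof
  define k where "k = label x y"
  assume "label x y \<in> jumps x"
  then have k: "1 \<le> k" "k \<le> n" and ne: "inf x (m (k - 1)) \<noteq> inf x (m k)"
    unfolding jumps_def k_def by auto
  define j where "j = k - 1"
  have kj: "k = Suc j" "j < n" using k j_def by auto
  have mjk: "m j \<le> m k" using m_mono[of j k] kj by simp
  have "sup (inf x (m k)) (m j) \<noteq> m j"
  proof
    assume "sup (inf x (m k)) (m j) = m j"
    then have "inf x (m k) \<le> inf x (m j)" by (metis inf.cobounded1 le_inf_iff sup.absorb_iff2)
    moreover have "inf x (m j) \<le> inf x (m k)" using mjk by (simp add: le_infI2)
    ultimately show False using ne j_def by (metis order.antisym)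
  qed
  moreover have "covers (m j) (m k)" using covers_m[OF kj(2)] kj(1) by simp
  moreover have "sup (inf x (m k)) (m j) \<le> m k"
    using mjk by (simp add: le_infI2)
  ultimately have join: "sup (inf x (m k)) (m j) = m k"
    using covers_between[of "m j" "m k" "sup (inf x (m k)) (m j)"] by simp
  have "inf y (m k) = inf (inf y (m k)) (sup (inf x (m k)) (m j))"
    using join by simp
  also have "\<dots> = sup (inf (inf y (m k)) (inf x (m k))) (inf (inf y (m k)) (m j))"
    by (intro distrib_covers gen_sublattice_intros) simp_all
  also have "\<dots> = sup (inf x (m k)) (inf y (m j))"
  proof -
    have "inf (inf y (m k)) (inf x (m k)) = inf x (m k)" "inf (inf y (m k)) (m j) = inf y (m j)"
      by (insert le_covers mjk, (rule order.antisym; auto intro: le_infI1 le_infI2))+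
    then show ?thesis by simp
  qed
  also have "\<dots> = inf x (m k)"
    using inf_m_below_label[of j] kj mjk k_def by (simp add: le_infI2 sup_absorb1)
  finally show False using inf_m_ne_from_label[of k] k_def by simp
qed

lemma jumps_above_label: "label x y < i \<Longrightarrow> i \<in> jumps y \<Longrightarrow> i \<in> jumps x"
proof (rule ccontr)
  assume i: "label x y < i" "i \<in> jumps y" "i \<notin> jumps x"
  have eq: "inf x (m (i - 1)) = inf x (m i)" using i unfolding jumps_def by auto
  have mi: "m (i - 1) \<le> m i" by (rule m_mono) simp
  have "inf y (m i) = inf (inf y (m i)) (sup x (inf y (m (i - 1))))"
    using sup_inf_m_from_label[of "i - 1"] i(1) by (simp add: inf.absorb1)
  also have "\<dots> = sup (inf (inf y (m i)) x) (inf (inf y (m i)) (inf y (m (i - 1))))"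
    by (intro distrib_covers gen_sublattice_intros) simp_all
  also have "\<dots> = sup (inf x (m i)) (inf y (m (i - 1)))"
  proof -
    have "inf (inf y (m i)) x = inf x (m i)" "inf (inf y (m i)) (inf y (m (i - 1))) = inf y (m (i - 1))"
      by (insert le_covers mi, (rule order.antisym; auto intro: le_infI1 le_infI2))+
    then show ?thesis by simp
  qed
  also have "\<dots> = inf y (m (i - 1))"
    using eq le_covers mi by (metis inf_mono order.refl sup.absorb2)
  finally show False using i unfolding jumps_def by auto
qed

lemma jumps_covers: "jumps y = insert (label x y) (jumps x)"
proof (intro set_eqI iffI)
  fix i assume i: "i \<in> jumps y"
  have "i \<in> jumps x" if "i < label x y"
  proof -
    have "i - 1 < label x y" using that by simp
    then show ?thesis
      using i that inf_m_below_label[of i] inf_m_below_label[of "i - 1"] unfolding jumps_def by auto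
  qed
  then show "i \<in> insert (label x y) (jumps x)"
    using i jumps_above_label[of i] by (metis insertI1 insertI2 linorder_neqE_nat)
next
  fix i assume "i \<in> insert (label x y) (jumps x)"
  then show "i \<in> jumps y"
    using label_mem_jumps jumps_mono[OF le_covers] by auto
qed

end

lemma jumps_strict_mono: "x < y \<Longrightarrow> jumps x \<subset> jumps y"
proof -
  assume "x < y"
  then obtain z where z: "covers x z" "z \<le> y" using ex_covers_below by blast
  have "jumps z = insert (label x z) (jumps x)" "label x z \<notin> jumps x" "jumps z \<subseteq> jumps y"
    using jumps_covers[OF z(1)] label_not_mem_jumps[OF z(1)] jumps_mono[OF z(2)] by simp_all
  then show ?thesis by blast
qed

lemma eq_if_jumps_subset: "x \<le> y \<Longrightarrow> jumps y \<subseteq> jumps x \<Longrightarrow> x = y"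
proof (rule ccontr)
  assume "x \<le> y" "jumps y \<subseteq> jumps x" "x \<noteq> y"
  then have "jumps x \<subset> jumps y" using jumps_strict_mono by simp
  then show False using \<open>jumps y \<subseteq> jumps x\<close> by blast
qed

lemma covers_if_jumps_insert:
  assumes "x \<le> y" "jumps y = insert l (jumps x)" "l \<notin> jumps x"
  shows "covers x y"
  unfolding covers_def
proof (intro conjI notI)
  have "l \<in> jumps y" using assms(2) by simp
  then have "x \<noteq> y" using assms(3) by auto
  then show "x < y" using assms(1) by simp
  assume "\<exists>w. x < w \<and> w < y"
  then obtain w where "x < w" "w < y" by blast
  have xw: "jumps x \<subset> jumps w" and "jumps w \<subset> insert l (jumps x)"
    using jumps_strict_mono[OF \<open>x < w\<close>] jumps_strict_mono[OF \<open>w < y\<close>] assms(2) by simp_all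
  then show False by blast
qed

definition labeling :: "'a \<Rightarrow> 'a \<Rightarrow> int" where
  "labeling x y = int (label x y)"

lemma label_seq_max_chain_of:
  "max_chain_of xs s t \<Longrightarrow>
     distinct (label_seq labeling xs) \<and> set (label_seq labeling xs) = int ` (jumps t - jumps s)"
proof (induction xs arbitrary: s rule: induct_list012)
  case (3 x y zs)
  then have "x = s" and cov: "covers s y" and tail: "max_chain_of (y # zs) y t" by auto
  have IH: "distinct (label_seq labeling (y # zs))"
    "set (label_seq labeling (y # zs)) = int ` (jumps t - jumps y)"
    using "3.IH"(2)[OF tail] by auto
  have "jumps y = insert (label s y) (jumps s)" "label s y \<notin> jumps s" "jumps y \<subseteq> jumps t"
    using jumps_covers[OF cov] label_not_mem_jumps[OF cov] jumps_mono[OF max_chain_of_le[OF tail]]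
    by simp_all
  then have "jumps t - jumps s = insert (label s y) (jumps t - jumps y)"
    and "label s y \<notin> jumps t - jumps y" by auto
  moreover have "labeling s y = int (label s y)" by (simp add: labeling_def)
  ultimately show ?case
    using IH \<open>x = s\<close> by auto
qed auto

lemma less_inf_sup_m_if_jump:
  assumes "s \<le> t" "l \<in> jumps t - jumps s"
  shows "s < inf t (sup s (m l))"
proof -
  have le: "s \<le> inf t (sup s (m l))" using assms(1) by simp
  have "s \<noteq> inf t (sup s (m l))"
  proof
    assume "s = inf t (sup s (m l))"
    then have "inf t (m l) \<le> s"
      using inf_sup_m[OF assms(1), of l] by (metis sup.cobounded2)
    have "inf t (m j) = inf s (m j)" if "j \<le> l" for j
    proof (rule order.antisym)
      have "inf t (m j) \<le> inf t (m l)" using m_mono[OF that] by (simp add: le_infI2)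
      then have "inf t (m j) \<le> s" using \<open>inf t (m l) \<le> s\<close> by (rule order.trans)
      then show "inf t (m j) \<le> inf s (m j)" by simp
      show "inf s (m j) \<le> inf t (m j)" using assms(1) by (simp add: le_infI1)
    qed
    then show False using assms(2) unfolding jumps_def by auto
  qed
  then show ?thesis using le by (rule order.not_eq_order_implies_strict)
qed

lemma greedy_cover:
  assumes "s < t"
  defines "l \<equiv> Min (jumps t - jumps s)"
  defines "s' \<equiv> inf t (sup s (m l))"
  shows "covers s s'" "s' \<le> t" "label s s' = l" "jumps s' = insert l (jumps s)"
proof -
  have fin: "finite (jumps t - jumps s)"
    using finite_subset[OF jumps_subset] by blast
  have l: "l \<in> jumps t - jumps s" and l_min: "\<And>i. i \<in> jumps t - jumps s \<Longrightarrow> l \<le> i"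
    using jumps_strict_mono[OF assms(1)] Min_in[OF fin] Min_le[OF fin] unfolding l_def by auto
  show "s' \<le> t" unfolding s'_def by simp
  have "s \<le> s'" unfolding s'_def using assms(1) by simp
  have sub: "jumps s' \<subseteq> insert l (jumps s)"
  proof
    fix i assume i: "i \<in> jumps s'"
    then have "i \<in> jumps t" using jumps_mono[OF \<open>s' \<le> t\<close>] by blast
    moreover have "i \<in> jumps s \<union> {1..l}"
      using i jumps_mono[of s' "sup s (m l)"] jumps_sup_m[of s l] unfolding s'_def by auto
    ultimately show "i \<in> insert l (jumps s)" using l_min[of i] by force
  qed
  have "jumps s \<subset> jumps s'"
    using jumps_strict_mono[OF less_inf_sup_m_if_jump[OF _ l]] assms(1) unfolding s'_def by simp
  then show jumps_s': "jumps s' = insert l (jumps s)" using sub by blast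
  then show "covers s s'"
    using covers_if_jumps_insert \<open>s \<le> s'\<close> l by blast
  then have "jumps s' = insert (label s s') (jumps s)" "label s s' \<notin> jumps s"
    using jumps_covers label_not_mem_jumps by simp_all
  then have "label s s' \<in> insert l (jumps s)" using jumps_s' by blast
  then show "label s s' = l" using \<open>label s s' \<notin> jumps s\<close> by simp
qed

lemma greedy_cover_unique:
  assumes "covers s z" "z \<le> t" "label s z = Min (jumps t - jumps s)"
  shows "z = inf t (sup s (m (Min (jumps t - jumps s))))"
proof -
  have "s < t" using covers_less[OF assms(1)] assms(2) by (rule order.strict_trans2)
  have "z \<le> inf t (sup s (m (Min (jumps t - jumps s))))"
    using assms(2,3) le_sup_m_label[of z s] by simp
  moreover have "jumps z = jumps (inf t (sup s (m (Min (jumps t - jumps s)))))"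
    using jumps_covers[OF assms(1)] greedy_cover(4)[OF \<open>s < t\<close>] assms(3) by simp
  ultimately show ?thesis by (intro eq_if_jumps_subset) simp_all
qed

lemma first_label_increasing_chain:
  assumes "max_chain_of (s # z # r) s t" "increasing_chain labeling (s # z # r)"
  shows "label s z = Min (jumps t - jumps s)"
proof (rule Min_eqI[symmetric])
  have labels: "set (label_seq labeling (s # z # r)) = int ` (jumps t - jumps s)"
    using label_seq_max_chain_of[OF assms(1)] by blast
  show "finite (jumps t - jumps s)" using finite_subset[OF jumps_subset] by blast
  show "label s z \<in> jumps t - jumps s"
    using labels by (force simp: labeling_def)
  show "label s z \<le> i" if "i \<in> jumps t - jumps s" for i
  proof -
    have "int i \<in> set (labeling s z # label_seq labeling (z # r))" using labels that by auto
    then have "labeling s z \<le> int i" using assms(2) by (auto simp: increasing_chain_Cons_Cons)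
    then show ?thesis by (simp add: labeling_def)
  qed
qed

lemma increasing_chain_unique:
  "max_chain_of xs s t \<Longrightarrow> increasing_chain labeling xs \<Longrightarrow>
   max_chain_of ys s t \<Longrightarrow> increasing_chain labeling ys \<Longrightarrow> xs = ys"
proof (induction xs arbitrary: s ys rule: induct_list012)
  case (2 x)
  then show ?case using max_chain_of_same by auto
next
  case (3 x y zs)
  then have "x = s" and cov: "covers s y" and tail: "max_chain_of (y # zs) y t" by auto
  then have "s \<noteq> t" using covers_less max_chain_of_le by (metis leD)
  then obtain z r where ys: "ys = s # z # r" "covers s z" "max_chain_of (z # r) z t"
    using max_chain_of_ConsE[OF "3.prems"(3)] by blast
  have "y = z"
    using greedy_cover_unique[OF cov max_chain_of_le[OF tail]]
      greedy_cover_unique[OF ys(2) max_chain_of_le[OF ys(3)]]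
      first_label_increasing_chain[of s y zs t] first_label_increasing_chain[of s z r t]
      "3.prems" ys(1) \<open>x = s\<close> by simp
  moreover have "increasing_chain labeling (y # zs)" "increasing_chain labeling (z # r)"
    using "3.prems"(2,4) ys(1) \<open>x = s\<close> by (simp_all add: increasing_chain_Cons_Cons)
  then have "y # zs = z # r"
    using "3.IH"(2)[of y "z # r"] tail ys(3) \<open>y = z\<close> by simp
  ultimately show ?case using ys(1) \<open>x = s\<close> by simp
qed simp

lemma ex_increasing_chain: "s \<le> t \<Longrightarrow> \<exists>xs. max_chain_of xs s t \<and> increasing_chain labeling xs"
proof (induction "card (jumps t - jumps s)" arbitrary: s rule: less_induct)
  case less
  show ?case
  proof (cases "s = t")
    case True
    then show ?thesis by (intro exI[of _ "[s]"]) (simp add: increasing_chain_def)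
  next
    case False
    then have "s < t" using less.prems by simp
    define l where "l = Min (jumps t - jumps s)"
    define s' where "s' = inf t (sup s (m l))"
    note greedy = greedy_cover[OF \<open>s < t\<close>, folded l_def, folded s'_def]
    have fin: "finite (jumps t - jumps s)" using finite_subset[OF jumps_subset] by blast
    have "l \<in> jumps t - jumps s"
      using Min_in[OF fin] jumps_strict_mono[OF \<open>s < t\<close>] unfolding l_def by auto
    then have "jumps t - jumps s' \<subset> jumps t - jumps s"
      using greedy(4) by auto
    then obtain ys where ys: "max_chain_of ys s' t" "increasing_chain labeling ys"
      using less.hyps[OF psubset_card_mono[OF fin] greedy(2)] by blast
    then obtain r where r: "ys = s' # r" by (cases ys) (auto simp: max_chain_of_def)
    have "labeling s s' \<le> v" if "v \<in> set (label_seq labeling ys)" for v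
    proof -
      have "v \<in> int ` (jumps t - jumps s')" using that label_seq_max_chain_of[OF ys(1)] by simp
      then obtain i where i: "i \<in> jumps t - jumps s'" "v = int i" by blast
      then have "i \<in> jumps t - jumps s" using greedy(4) by auto
      then have "l \<le> i" unfolding l_def by (rule Min_le[OF fin])
      then show ?thesis using i(2) greedy(3) by (simp add: labeling_def)
    qed
    then have "max_chain_of (s # ys) s t \<and> increasing_chain labeling (s # ys)"
      using ys greedy(1) r by (simp add: increasing_chain_Cons_Cons)
    then show ?thesis by blast
  qed
qed

lemma EL_labeling_labeling: "EL_labeling labeling"
  unfolding EL_labeling_def
proof (intro allI impI conjI)
  fix s t :: 'a assume "s \<le> t"
  show "\<exists>!xs. max_chain_of xs s t \<and> increasing_chain labeling xs"
    using ex_increasing_chain[OF \<open>s \<le> t\<close>] increasing_chain_unique by blast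
  show "(label_seq labeling xs, label_seq labeling ys) \<in> lexord {(a, b). a < b}"
    if "max_chain_of xs s t \<and> increasing_chain labeling xs \<and> max_chain_of ys s t \<and> ys \<noteq> xs" for xs ys
  proof -
    have "\<not> increasing_chain labeling ys" using that increasing_chain_unique by blast
    then have "label_seq labeling ys \<noteq> label_seq labeling xs"
      using that unfolding increasing_chain_def by auto
    then show ?thesis
      using that label_seq_max_chain_of[of xs s t] label_seq_max_chain_of[of ys s t]
      by (intro lexord_less_if_sorted_distinct_perm) (auto simp: increasing_chain_def)
  qed
qed

lemma Sn_EL_labeling_labeling: "Sn_EL_labeling n labeling"
  unfolding Sn_EL_labeling_def
  using EL_labeling_labeling label_seq_max_chain_of[of _ bot top]
  by (simp add: jumps_bot jumps_top image_int_atLeastAtMost)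

end

subsection \<open>The M-chain of an S_n EL-labelling\<close>

locale Sn_EL_labeled =
  fixes lam :: "'a::{finite,bounded_lattice} \<Rightarrow> 'a \<Rightarrow> int" and n :: nat
  assumes Sn_EL_labeling: "Sn_EL_labeling n lam"
begin

lemma label_seq_bot_top:
  "max_chain_of xs bot top \<Longrightarrow> distinct (label_seq lam xs) \<and> set (label_seq lam xs) = {1..int n}"
  using Sn_EL_labeling unfolding Sn_EL_labeling_def by blast

lemma EL_labeling: "EL_labeling lam"
  using Sn_EL_labeling unfolding Sn_EL_labeling_def by blast

lemma ex1_increasing_chain: "s \<le> t \<Longrightarrow> \<exists>!xs. max_chain_of xs s t \<and> increasing_chain lam xs"
  using EL_labeling unfolding EL_labeling_def by blast

lemma ex_increasing_chain: "s \<le> t \<Longrightarrow> \<exists>xs. max_chain_of xs s t \<and> increasing_chain lam xs"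
  using ex1_implies_ex[OF ex1_increasing_chain] .

lemma ex_max_chain_of: "(s::'a) \<le> t \<Longrightarrow> \<exists>xs. max_chain_of xs s t"
  using ex_increasing_chain[of s t] by blast

definition label_set :: "'a \<Rightarrow> int set" where
  "label_set x = set (label_seq lam (SOME xs. max_chain_of xs bot x))"

text \<open>Completing a chain from bot to x by a fixed chain from x to top gives a permutation of
  {1..n}, so the labels below x are the complement of the labels above x.\<close>

lemma label_set_eq:
  assumes "max_chain_of xs bot x"
  shows "set (label_seq lam xs) = label_set x"
proof -
  have below: "set (label_seq lam zs) = {1..int n} - set (label_seq lam ys)"
    if "max_chain_of zs bot x" "max_chain_of ys x top" for zs ys
  proof -
    note app = max_chain_of_append[OF that, of lam]
    have "distinct (label_seq lam zs @ label_seq lam ys)"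
      "set (label_seq lam zs @ label_seq lam ys) = {1..int n}"
      using label_seq_bot_top[OF conjunct1[OF app]] unfolding conjunct2[OF app] by simp_all
    then show ?thesis by auto
  qed
  obtain ys where ys: "max_chain_of ys x top" using ex_max_chain_of[OF top_greatest] by blast
  have "max_chain_of (SOME zs. max_chain_of zs bot x) bot x"
    using someI_ex[OF ex_max_chain_of[OF bot_least]] .
  then show ?thesis
    using below[OF assms ys] below[OF _ ys] unfolding label_set_def by simp
qed

lemma label_seq_max_chain_of:
  assumes "max_chain_of zs x y"
  shows "set (label_seq lam zs) = label_set y - label_set x" "label_set x \<subseteq> label_set y"
proof -
  obtain xs where xs: "max_chain_of xs bot x" using ex_max_chain_of[OF bot_least] by blast
  obtain ws where ws: "max_chain_of ws y top" using ex_max_chain_of[OF top_greatest] by blast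
  note xzs = max_chain_of_append[OF xs assms, of lam]
  note xzws = max_chain_of_append[OF conjunct1[OF xzs] ws, of lam]
  have "distinct ((label_seq lam xs @ label_seq lam zs) @ label_seq lam ws)"
    using label_seq_bot_top[OF conjunct1[OF xzws]] unfolding conjunct2[OF xzws] conjunct2[OF xzs]
    by simp
  then have "set (label_seq lam xs) \<inter> set (label_seq lam zs) = {}" by auto
  moreover have "label_set y = label_set x \<union> set (label_seq lam zs)"
    using label_set_eq[OF conjunct1[OF xzs]] label_set_eq[OF xs] unfolding conjunct2[OF xzs] by simp
  ultimately show "set (label_seq lam zs) = label_set y - label_set x" "label_set x \<subseteq> label_set y"
    using label_set_eq[OF xs] by auto
qed

lemma label_set_mono: "x \<le> y \<Longrightarrow> label_set x \<subseteq> label_set y"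
  using ex_max_chain_of[of x y] label_seq_max_chain_of(2) by blast

lemma eq_if_label_set_subset:
  assumes "x \<le> y" "label_set y \<subseteq> label_set x"
  shows "x = y"
proof (rule ccontr)
  assume "x \<noteq> y"
  obtain zs where zs: "max_chain_of zs x y" using ex_max_chain_of[OF assms(1)] by blast
  obtain z r where "zs = x # z # r" using max_chain_of_ConsE[OF zs \<open>x \<noteq> y\<close>] by blast
  then have "lam x z \<in> set (label_seq lam zs)" by simp
  then have "lam x z \<in> label_set y - label_set x" using label_seq_max_chain_of(1)[OF zs] by simp
  with assms(2) show False by blast
qed

lemma label_set_bot: "label_set bot = {}"
  using label_set_eq[of "[bot]" bot] by simp

lemma label_set_top: "label_set top = {1..int n}"
proof -
  obtain xs where "max_chain_of xs (bot::'a) top" using ex_max_chain_of[OF bot_least[of top]] by auto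
  then show ?thesis using label_set_eq label_seq_bot_top by blast
qed

lemma label_set_subset: "label_set x \<subseteq> {1..int n}"
  using label_set_mono[of x top] label_set_top by simp

definition mchain :: "'a list" where
  "mchain = (THE xs. max_chain_of xs bot top \<and> increasing_chain lam xs)"

abbreviation m :: "nat \<Rightarrow> 'a" where
  "m i \<equiv> mchain ! i"

lemma max_chain_of_mchain: "max_chain_of mchain bot top"
  and increasing_mchain: "increasing_chain lam mchain"
  using theI'[OF ex1_increasing_chain[OF bot_least]] unfolding mchain_def by auto

lemma label_seq_mchain: "label_seq lam mchain = [1..int n]"
  using sorted_distinct_set_unique[of "label_seq lam mchain" "[1..int n]"]
    label_seq_bot_top[OF max_chain_of_mchain] increasing_mchain
  unfolding increasing_chain_def by simp

lemma length_mchain: "length mchain = Suc n"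
proof -
  have "length (label_seq lam mchain) = length mchain - 1" by (simp add: label_seq_def)
  moreover have "mchain \<noteq> []" using max_chain_of_mchain unfolding max_chain_of_def by simp
  ultimately show ?thesis using label_seq_mchain by (cases mchain) auto
qed

lemma m_0: "m 0 = bot" and m_n: "m n = top"
  using max_chain_of_mchain length_mchain
  unfolding max_chain_of_def by (auto simp: hd_conv_nth last_conv_nth)

lemma covers_m: "i < n \<Longrightarrow> covers (m i) (m (Suc i))"
  using max_chain_of_mchain length_mchain unfolding max_chain_of_def by simp

lemma lam_m: "i < n \<Longrightarrow> lam (m i) (m (Suc i)) = int i + 1"
proof -
  assume "i < n"
  then have "label_seq lam mchain ! i = lam (m i) (m (Suc i))"
    using length_mchain by (simp add: label_seq_def nth_tl)
  moreover have "[1..int n] ! i = 1 + int i" using nth_upto[of 1 i "int n"] \<open>i < n\<close> by simp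
  ultimately show ?thesis using label_seq_mchain by simp
qed

lemma label_set_m: "i \<le> n \<Longrightarrow> label_set (m i) = {1..int i}"
proof (induction i)
  case 0
  then show ?case using m_0 label_set_bot by simp
next
  case (Suc i)
  then have "i < n" by simp
  have c: "max_chain_of [m i, m (Suc i)] (m i) (m (Suc i))" using covers_m[OF \<open>i < n\<close>] by simp
  have "{lam (m i) (m (Suc i))} = label_set (m (Suc i)) - label_set (m i)"
    "label_set (m i) \<subseteq> label_set (m (Suc i))"
    using label_seq_max_chain_of[OF c] by auto
  then have "label_set (m (Suc i)) = insert (lam (m i) (m (Suc i))) (label_set (m i))"
    by blast
  also have "\<dots> = insert (int i + 1) {1..int i}"
    using Suc.IH \<open>i < n\<close> lam_m[OF \<open>i < n\<close>] by simp
  also have "\<dots> = {1..int (Suc i)}" by auto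
  finally show ?case .
qed

lemma m_mono: "i \<le> j \<Longrightarrow> j \<le> n \<Longrightarrow> m i \<le> m j"
  using sorted_wrt_less_nth_le[OF sorted_wrt_less_if_max_chain_of[OF max_chain_of_mchain]] length_mchain
  by simp

lemma eq_m_if_label_set:
  assumes "i \<le> n" "label_set u = {1..int i}"
  shows "u = m i"
proof -
  obtain bs where bs: "max_chain_of bs bot u" "increasing_chain lam bs"
    using ex_increasing_chain[OF bot_least] by blast
  obtain cs where cs: "max_chain_of cs u top" "increasing_chain lam cs"
    using ex_increasing_chain[OF top_greatest] by blast
  note bcs = max_chain_of_append[OF bs(1) cs(1), of lam]
  have "set (label_seq lam bs) = {1..int i}" "set (label_seq lam cs) = {1..int n} - {1..int i}"
    using label_set_eq[OF bs(1)] label_seq_max_chain_of(1)[OF cs(1)] assms(2) label_set_top by simp_all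
  then have "increasing_chain lam (bs @ tl cs)"
    using bs(2) cs(2) bcs unfolding increasing_chain_def by (auto simp: sorted_append)
  then have "bs @ tl cs = mchain"
    using ex1_increasing_chain[OF bot_least] bcs max_chain_of_mchain increasing_mchain by blast
  moreover have "u \<in> set bs" using bs(1) unfolding max_chain_of_def by (metis last_in_set)
  ultimately obtain j where j: "j \<le> n" "m j = u"
    using length_mchain by (metis Un_iff in_set_conv_nth less_Suc_eq_le set_append)
  then have "{1..int j} = {1..int i}" using label_set_m assms(2) by metis
  then have "j = i" by (metis card_atLeastAtMost_int diff_add_cancel nat_int)
  then show ?thesis using j by simp
qed

lemma split_increasing_chain:
  "max_chain_of xs s t \<Longrightarrow> increasing_chain lam xs \<Longrightarrow>
    \<exists>z. s \<le> z \<and> z \<le> t \<and> label_set z = label_set s \<union> {l \<in> label_set t. l \<le> \<tau>}"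
proof (induction xs arbitrary: s rule: induct_list012)
  case (2 x)
  then show ?case by (intro exI[of _ s]) auto
next
  case (3 x y zs)
  then have "x = s" and cov: "covers s y" and tail: "max_chain_of (y # zs) y t" by auto
  have sorted: "sorted (lam s y # label_seq lam (y # zs))"
    using "3.prems"(2) \<open>x = s\<close> unfolding increasing_chain_def by simp
  have cov_chain: "max_chain_of [s, y] s y" using cov by simp
  have Sy: "label_set y = insert (lam s y) (label_set s)"
    using label_seq_max_chain_of[OF cov_chain] by auto
  have labels: "set (lam s y # label_seq lam (y # zs)) = label_set t - label_set s"
    using label_seq_max_chain_of(1)[OF "3.prems"(1)] \<open>x = s\<close> by simp
  show ?case
  proof (cases "lam s y \<le> \<tau>")
    case True
    obtain z where z: "y \<le> z" "z \<le> t" "label_set z = label_set y \<union> {l \<in> label_set t. l \<le> \<tau>}"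
      using "3.IH"(2)[OF tail] sorted unfolding increasing_chain_def by auto
    have "s \<le> z" using covers_less[OF cov] z(1) by simp
    moreover have "label_set z = label_set s \<union> {l \<in> label_set t. l \<le> \<tau>}"
      using z(3) Sy labels True by auto
    ultimately show ?thesis using z(2) by blast
  next
    case False
    have "{l \<in> label_set t. l \<le> \<tau>} \<subseteq> label_set s"
    proof
      fix l assume l: "l \<in> {l \<in> label_set t. l \<le> \<tau>}"
      then have "l \<notin> set (lam s y # label_seq lam (y # zs))" using sorted False by auto
      then show "l \<in> label_set s" using labels l by auto
    qed
    then show ?thesis using max_chain_of_le[OF "3.prems"(1)] by blast
  qed
qed simp

lemma m_le_if_label_set:
  assumes "i \<le> n" "{1..int i} \<subseteq> label_set z"
  shows "m i \<le> z"
proof -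
  obtain bs where "max_chain_of bs bot z" "increasing_chain lam bs"
    using ex_increasing_chain[OF bot_least] by blast
  then obtain u where u: "u \<le> z" "label_set u = label_set bot \<union> {l \<in> label_set z. l \<le> int i}"
    using split_increasing_chain[where \<tau> = "int i"] by blast
  have "label_set u = {1..int i}" using u(2) label_set_bot assms(2) label_set_subset[of z] by auto
  then show ?thesis using eq_m_if_label_set[OF assms(1)] u(1) by simp
qed

lemma label_set_sup_m:
  assumes "i \<le> n"
  shows "label_set (sup x (m i)) = label_set x \<union> {1..int i}"
proof -
  let ?w = "sup x (m i)"
  obtain bs where "max_chain_of bs x ?w" "increasing_chain lam bs"
    using ex_increasing_chain[OF sup_ge1] by blast
  then obtain z where z: "x \<le> z" "z \<le> ?w" "label_set z = label_set x \<union> {l \<in> label_set ?w. l \<le> int i}"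
    using split_increasing_chain[where \<tau> = "int i"] by blast
  have mi: "{1..int i} \<subseteq> label_set ?w"
    using label_set_mono[OF sup_ge2[of "m i" x]] label_set_m[OF assms] by simp
  then have "{1..int i} \<subseteq> label_set z" using z(3) by auto
  then have "m i \<le> z" using m_le_if_label_set[OF assms] by blast
  then have "z = ?w" using z(1,2) by (simp add: order.antisym)
  then have "label_set ?w = label_set x \<union> {l \<in> label_set ?w. l \<le> int i}" using z(3) by simp
  moreover have "{l \<in> label_set ?w. l \<le> int i} \<subseteq> {1..int i}" using label_set_subset[of ?w] by auto
  ultimately show ?thesis using mi by blast
qed

lemma label_set_inf_m:
  assumes "i \<le> n"
  shows "label_set (inf x (m i)) = label_set x \<inter> {1..int i}"
proof -
  obtain bs where "max_chain_of bs bot x" "increasing_chain lam bs"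
    using ex_increasing_chain[OF bot_least] by blast
  then obtain z where z: "z \<le> x" "label_set z = label_set bot \<union> {l \<in> label_set x. l \<le> int i}"
    using split_increasing_chain[where \<tau> = "int i"] by blast
  have Sz: "label_set z = label_set x \<inter> {1..int i}"
    using z(2) label_set_bot label_set_subset[of x] by auto
  then have "label_set (sup z (m i)) = {1..int i}" using label_set_sup_m[OF assms] by auto
  then have "sup z (m i) = m i"
    using eq_if_label_set_subset[OF sup_ge2] label_set_m[OF assms] by (metis order.refl)
  then have "z \<le> inf x (m i)" using z(1) by (metis le_inf_iff sup.absorb_iff2)
  moreover have "label_set (inf x (m i)) \<subseteq> label_set x \<inter> {1..int i}"
    using label_set_mono[OF inf_le1[of x "m i"]] label_set_mono[OF inf_le2[of x "m i"]] label_set_m[OF assms]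
    by auto
  ultimately show ?thesis using eq_if_label_set_subset Sz by (metis order.antisym label_set_mono)
qed

lemma label_set_sup_inf_m:
  assumes "y \<le> c" "k \<le> n"
  shows "label_set (sup y (inf (m k) c)) = label_set y \<union> label_set (inf (m k) c)"
proof
  show "label_set y \<union> label_set (inf (m k) c) \<subseteq> label_set (sup y (inf (m k) c))"
    using label_set_mono[OF sup_ge1] label_set_mono[OF sup_ge2] by blast
  have "sup y (inf (m k) c) \<le> sup y (m k)" "sup y (inf (m k) c) \<le> c"
    using assms(1) by (simp_all add: le_infI1 le_supI2)
  then have "label_set (sup y (inf (m k) c)) \<subseteq> label_set (sup y (m k)) \<inter> label_set c"
    using label_set_mono by blast
  also have "\<dots> = (label_set y \<union> {1..int k}) \<inter> label_set c"
    using label_set_sup_m[OF assms(2)] by simp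
  also have "\<dots> \<subseteq> label_set y \<union> label_set (inf (m k) c)"
    using label_set_inf_m[OF assms(2), of c] label_set_mono[OF assms(1)] by (auto simp: inf_commute)
  finally show "label_set (sup y (inf (m k) c)) \<subseteq> label_set y \<union> label_set (inf (m k) c)" .
qed

definition generators :: "'a set \<Rightarrow> 'a set" where
  "generators C = (\<lambda>(i, c). inf (m i) c) ` ({..n} \<times> insert top C)"

lemma inf_generators:
  assumes "is_chain C" "g1 \<in> generators C" "g2 \<in> generators C"
  shows "inf g1 g2 \<in> generators C" "label_set (inf g1 g2) = label_set g1 \<inter> label_set g2"
proof -
  obtain i1 c1 i2 c2 where g: "g1 = inf (m i1) c1" "g2 = inf (m i2) c2"
    and i: "i1 \<le> n" "i2 \<le> n" and c: "c1 \<in> insert top C" "c2 \<in> insert top C"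
    using assms(2,3) unfolding generators_def by auto
  have comparable: "c1 \<le> c2 \<or> c2 \<le> c1"
    using assms(1) c unfolding is_chain_def by auto
  have "inf g1 g2 = inf (inf (m i1) (m i2)) (inf c1 c2)"
    unfolding g by (simp add: inf_aci)
  also have "inf (m i1) (m i2) = m (min i1 i2)"
    using m_mono i by (cases "i1 \<le> i2") (auto simp: inf_absorb1 inf_absorb2)
  finally have meet: "inf g1 g2 = inf (m (min i1 i2)) (inf c1 c2)" .
  have c12: "inf c1 c2 \<in> insert top C"
    using comparable c by (auto simp: inf_absorb1 inf_absorb2)
  moreover have "min i1 i2 \<le> n" using i by simp
  ultimately show "inf g1 g2 \<in> generators C"
    unfolding meet generators_def by force
  have "label_set (inf c1 c2) = label_set c1 \<inter> label_set c2"
  proof (cases "c1 \<le> c2")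
    case True
    then show ?thesis using label_set_mono[OF True] by (simp add: inf_absorb1 Int_absorb2)
  next
    case False
    then have "c2 \<le> c1" using comparable by simp
    then show ?thesis using label_set_mono[OF \<open>c2 \<le> c1\<close>] by (simp add: inf_absorb2 Int_absorb1)
  qed
  moreover have "label_set g1 = label_set c1 \<inter> {1..int i1}" "label_set g2 = label_set c2 \<inter> {1..int i2}"
    using label_set_inf_m[OF i(1), of c1] label_set_inf_m[OF i(2), of c2] g by (simp_all add: inf_commute)
  moreover have "label_set (inf g1 g2) = label_set (inf c1 c2) \<inter> {1..int (min i1 i2)}"
    using label_set_inf_m[of "min i1 i2" "inf c1 c2"] meet i by (simp add: inf_commute)
  ultimately show "label_set (inf g1 g2) = label_set g1 \<inter> label_set g2" by auto
qed

definition join_set :: "'a set \<Rightarrow> 'a" where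
  "join_set F = Sup_fin (insert bot F)"

lemma join_set_empty [simp]: "join_set {} = bot"
  by (simp add: join_set_def)

lemma join_set_insert: "join_set (insert g F) = sup g (join_set F)"
  unfolding join_set_def using Sup_fin.insert[of "insert bot F" g] by (simp add: insert_commute)

lemma join_set_singleton [simp]: "join_set {g} = g"
  using join_set_insert[of g "{}"] by simp

lemma join_set_upper: "g \<in> F \<Longrightarrow> g \<le> join_set F"
  unfolding join_set_def by (rule Sup_fin.coboundedI) auto

lemma join_set_least: "(\<And>g. g \<in> F \<Longrightarrow> g \<le> u) \<Longrightarrow> join_set F \<le> u"
  unfolding join_set_def by (rule Sup_fin.boundedI) auto

lemma join_set_union: "join_set (F1 \<union> F2) = sup (join_set F1) (join_set F2)"
  unfolding join_set_def using Sup_fin.union[of "insert bot F1" "insert bot F2"] by simp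

text \<open>Adding the generators one at a time, in the order of their chain parts c, every partial
  join lies below the chain part of the next generator, so that label_set_sup_inf_m applies.\<close>

lemma label_set_join_set:
  assumes "is_chain C" "F \<subseteq> generators C"
  shows "label_set (join_set F) = \<Union> (label_set ` F)"
proof -
  obtain P where P: "P \<subseteq> {..n} \<times> insert top C" "F = (\<lambda>(i, c). inf (m i) c) ` P"
    using assms(2) unfolding generators_def subset_image_iff by blast
  have "snd ` P \<subseteq> insert top C" using P(1) by auto
  moreover have "is_chain (insert top C)" using assms(1) unfolding is_chain_def by auto
  ultimately have chain: "is_chain (snd ` P)" by (rule is_chain_subset[rotated])
  have "finite P" using finite_subset[OF P(1)] by simp
  from this chain have "label_set (join_set ((\<lambda>(i, c). inf (m i) c) ` P)) =
      \<Union> (label_set ` (\<lambda>(i, c). inf (m i) c) ` P)"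
  proof (induction rule: finite_chain_ranking_induct)
    case (insert x Q)
    obtain k c where x: "x = (k, c)" "k \<le> n" using insert.hyps(3) P(1) by fastforce
    have "join_set ((\<lambda>(i, c). inf (m i) c) ` Q) \<le> c"
    proof (rule join_set_least)
      fix g assume "g \<in> (\<lambda>(i, c). inf (m i) c) ` Q"
      then obtain j d where "(j, d) \<in> Q" "g = inf (m j) d" by auto
      then have "g \<le> d" and "d \<le> c" using insert.hyps(5)[of "(j, d)"] x by auto
      then show "g \<le> c" by (rule order.trans)
    qed
    from label_set_sup_inf_m[OF this x(2)] show ?case
      using insert.IH x(1) by (simp add: join_set_insert sup_commute)
  qed (simp add: label_set_bot)
  then show ?thesis using P(2) by simp
qed

definition joins :: "'a set \<Rightarrow> 'a set" where
  "joins C = join_set ` Pow (generators C)"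

lemma sup_joins:
  assumes "is_chain C" "a \<in> joins C" "b \<in> joins C"
  shows "sup a b \<in> joins C" "label_set (sup a b) = label_set a \<union> label_set b"
proof -
  obtain F1 F2 where F: "F1 \<subseteq> generators C" "F2 \<subseteq> generators C" "a = join_set F1" "b = join_set F2"
    using assms(2,3) unfolding joins_def by blast
  then have "sup a b = join_set (F1 \<union> F2)" by (simp add: join_set_union)
  then show "sup a b \<in> joins C" "label_set (sup a b) = label_set a \<union> label_set b"
    using F label_set_join_set[OF assms(1)] unfolding joins_def by auto
qed

lemma inf_joins:
  assumes "is_chain C" "a \<in> joins C" "b \<in> joins C"
  shows "inf a b \<in> joins C" "label_set (inf a b) = label_set a \<inter> label_set b"
proof -
  obtain F1 F2 where F: "F1 \<subseteq> generators C" "F2 \<subseteq> generators C" "a = join_set F1" "b = join_set F2"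
    using assms(2,3) unfolding joins_def by blast
  define F3 where "F3 = {inf g1 g2 | g1 g2. g1 \<in> F1 \<and> g2 \<in> F2}"
  have F3: "F3 \<subseteq> generators C"
    using F(1,2) inf_generators(1)[OF assms(1)] unfolding F3_def by blast
  have "join_set F3 \<le> inf a b"
  proof (rule join_set_least)
    fix g assume "g \<in> F3"
    then obtain g1 g2 where g: "g1 \<in> F1" "g2 \<in> F2" "g = inf g1 g2" unfolding F3_def by blast
    then have "g1 \<le> a" "g2 \<le> b" using join_set_upper F(3,4) by simp_all
    then show "g \<le> inf a b" using g(3) by (auto intro: le_infI1 le_infI2)
  qed
  moreover have "label_set (join_set F3) = label_set a \<inter> label_set b"
  proof -
    have "label_set (join_set F3) = (\<Union>g1\<in>F1. \<Union>g2\<in>F2. label_set (inf g1 g2))"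
      using label_set_join_set[OF assms(1) F3] unfolding F3_def by blast
    also have "\<dots> = (\<Union>g1\<in>F1. \<Union>g2\<in>F2. label_set g1 \<inter> label_set g2)"
      using inf_generators(2)[OF assms(1)] F(1,2) by (intro SUP_cong) auto
    also have "\<dots> = \<Union> (label_set ` F1) \<inter> \<Union> (label_set ` F2)" by blast
    finally show ?thesis using label_set_join_set[OF assms(1)] F by simp
  qed
  moreover have "label_set (inf a b) \<subseteq> label_set a \<inter> label_set b"
    using label_set_mono[OF inf_le1] label_set_mono[OF inf_le2] by blast
  ultimately have "join_set F3 = inf a b"
    using eq_if_label_set_subset by simp
  then show "inf a b \<in> joins C"
    unfolding joins_def using F3 by (intro image_eqI[of _ _ F3]) simp_all
  show "label_set (inf a b) = label_set a \<inter> label_set b"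
    using \<open>join_set F3 = inf a b\<close> \<open>label_set (join_set F3) = label_set a \<inter> label_set b\<close> by simp
qed

lemma eq_if_label_set_joins:
  assumes "is_chain C" "a \<in> joins C" "b \<in> joins C" "label_set a = label_set b"
  shows "a = b"
proof -
  have "label_set (inf a b) = label_set a" "label_set (inf a b) = label_set b"
    using inf_joins(2)[OF assms(1-3)] assms(4) by simp_all
  then have "inf a b = a" "inf a b = b"
    using eq_if_label_set_subset[OF inf_le1[of a b]] eq_if_label_set_subset[OF inf_le2[of a b]] by simp_all
  then show ?thesis by simp
qed

lemma distributive_joins:
  assumes "is_chain C"
  shows "distributive_on (joins C)"
  unfolding distributive_on_def
proof (intro ballI)
  fix a b c assume abc: "a \<in> joins C" "b \<in> joins C" "c \<in> joins C"
  note sup = sup_joins[OF assms] and inf = inf_joins[OF assms]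
  have bc: "sup b c \<in> joins C" and ab: "inf a b \<in> joins C" and ac: "inf a c \<in> joins C"
    using sup(1)[OF abc(2,3)] inf(1)[OF abc(1,2)] inf(1)[OF abc(1,3)] .
  have "label_set (inf a (sup b c)) = label_set a \<inter> (label_set b \<union> label_set c)"
    using inf(2)[OF abc(1) bc] sup(2)[OF abc(2,3)] by simp
  also have "\<dots> = label_set (sup (inf a b) (inf a c))"
    using sup(2)[OF ab ac] inf(2)[OF abc(1,2)] inf(2)[OF abc(1,3)] by auto
  finally show "inf a (sup b c) = sup (inf a b) (inf a c)"
    using eq_if_label_set_joins[OF assms inf(1)[OF abc(1) bc] sup(1)[OF ab ac]] by simp
qed

lemma gen_sublattice_subset_joins:
  assumes "is_chain C"
  shows "gen_sublattice (set mchain \<union> C) \<subseteq> joins C"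
proof
  fix x assume "x \<in> gen_sublattice (set mchain \<union> C)"
  then show "x \<in> joins C"
  proof (induction rule: gen_sublattice.induct)
    case (base x)
    then have "x \<in> generators C"
    proof
      assume "x \<in> set mchain"
      then obtain i where "i \<le> n" "x = inf (m i) top"
        using length_mchain by (metis in_set_conv_nth inf_top_right less_Suc_eq_le)
      then show ?thesis unfolding generators_def by force
    next
      assume "x \<in> C"
      then have "x = inf (m n) x" using m_n by simp
      then show ?thesis unfolding generators_def using \<open>x \<in> C\<close> by force
    qed
    then show ?case
      unfolding joins_def by (intro image_eqI[of _ _ "{x}"]) auto
  next
    case (meet x y)
    then show ?case using inf_joins(1)[OF assms] by blast
  next
    case (join x y)
    then show ?case using sup_joins(1)[OF assms] by blast
  qed
qed

lemma M_chain_mchain: "M_chain (set mchain)"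
  unfolding M_chain_def
proof (intro conjI allI impI)
  show "is_maximal_chain (set mchain)"
    by (rule maximal_chain_set_if_max_chain_of[OF max_chain_of_mchain])
  fix C :: "'a set" assume "is_chain C"
  then show "distributive_on (gen_sublattice (set mchain \<union> C))"
    using distributive_on_subset[OF distributive_joins gen_sublattice_subset_joins] by blast
qed

end

lemma Sn_EL_labeling_if_M_chain:
  fixes M :: "'a::{finite,bounded_lattice} set"
  assumes "graded_of_rank n TYPE('a)" "M_chain M"
  shows "\<exists>lam :: 'a \<Rightarrow> 'a \<Rightarrow> int. Sn_EL_labeling n lam"
proof -
  have M: "is_maximal_chain M" "\<And>C. is_chain C \<Longrightarrow> distributive_on (gen_sublattice (M \<union> C))"
    using assms(2) unfolding M_chain_def by auto
  obtain xs where xs: "max_chain_of xs bot top" "set xs = M"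
    using max_chain_of_if_maximal_chain[OF M(1) finite] by blast
  have len: "length xs = Suc n"
    using assms(1) xs(1) unfolding graded_of_rank_def by blast
  define m where "m i = xs ! min i n" for i
  have "range m = set xs"
  proof
    show "range m \<subseteq> set xs" using len unfolding m_def by auto
    show "set xs \<subseteq> range m"
    proof
      fix y assume "y \<in> set xs"
      then obtain j where "j < length xs" "xs ! j = y" by (auto simp: in_set_conv_nth)
      then have "m j = y" using len unfolding m_def by simp
      then show "y \<in> range m" by blast
    qed
  qed
  have "indexed_M_chain m n"
  proof
    show "m 0 = bot" "\<And>i. n \<le> i \<Longrightarrow> m i = top"
      using xs(1) len unfolding m_def max_chain_of_def by (auto simp: hd_conv_nth last_conv_nth)
    show "\<And>i. i < n \<Longrightarrow> covers (m i) (m (Suc i))"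
      using xs(1) len unfolding m_def max_chain_of_def by simp
    show "\<And>C. is_chain C \<Longrightarrow> distributive_on (gen_sublattice (range m \<union> C))"
      using M(2) \<open>range m = set xs\<close> xs(2) by simp
  qed
  then show ?thesis using indexed_M_chain.Sn_EL_labeling_labeling by blast
qed

lemma supersolvable_if_Sn_EL_labeling:
  fixes lam :: "'a::{finite,bounded_lattice} \<Rightarrow> 'a \<Rightarrow> int"
  assumes "Sn_EL_labeling n lam"
  shows "supersolvable TYPE('a)"
  using Sn_EL_labeled.M_chain_mchain[OF Sn_EL_labeled.intro[OF assms]]
  unfolding supersolvable_def by blast

theorem mainTheorem1:
  fixes n :: nat
  assumes "graded_of_rank n TYPE('a::{finite, bounded_lattice})"
  shows "supersolvable TYPE('a) \<longleftrightarrow> (\<exists>lam :: 'a \<Rightarrow> 'a \<Rightarrow> int. Sn_EL_labeling n lam)"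
proof
  assume "supersolvable TYPE('a)"
  then obtain M :: "'a set" where "M_chain M" unfolding supersolvable_def by blast
  then show "\<exists>lam :: 'a \<Rightarrow> 'a \<Rightarrow> int. Sn_EL_labeling n lam"
    using Sn_EL_labeling_if_M_chain[OF assms] by blast
next
  assume "\<exists>lam :: 'a \<Rightarrow> 'a \<Rightarrow> int. Sn_EL_labeling n lam"
  then show "supersolvable TYPE('a)" using supersolvable_if_Sn_EL_labeling by blast
qed

end
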